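(* No randomized strategyproof mechanism for locating an obnoxious facility on $[0,1]$ has an approximation ratio better than $(5/4)^{1/p}$ for the $L_p$ social cost, for any $1\le p<\infty$. No randomized strategyproof mechanism has an approximation ratio better than $1.008$ for the $L_\infty$ social cost.
   Context: Agents $i=1,\dots,n$ have private locations $x_i\in[0,1]$. A randomized mechanism maps each reported profile to a distribution over $[0,1]$; agent $i$'s cost from a distribution $\pi$ is $\mathbb E_{y\sim\pi}[1-|x_i-y|]$, and the mechanism is strategyproof if no agent can decrease its expected cost by misreporting, holding others' reports fixed. $L_p$ social cost: $\mathrm{sc}_p(y,\mathbf x)=(\sum_i(1-|x_i-y|)^p)^{1/p}$, $\mathrm{sc}_\infty(y,\mathbf x)=\max_i(1-|x_i-y|)$; the mechanism's value is $\mathbb E_{y\sim f(\mathbf x)}[\mathrm{sc}_p(y,\mathbf x)]$. Approximation ratio: supremum over all numbers of agents and profiles of the mechanism's value divided by $\min_{z\in[0,1]}\mathrm{sc}_p(z,\mathbf x)$. *)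

theory Defs
  imports "HOL-Probability.Probability"
begin

text \<open>A profile of reported locations is a list of reals (its length is the number of agents).
A randomized mechanism maps each profile in [0,1]^n to a probability measure on [0,1].\<close>

definition rand_mechanism :: "(real list \<Rightarrow> real measure) \<Rightarrow> bool" where
  "rand_mechanism f \<longleftrightarrow>
     (\<forall>xs. set xs \<subseteq> {0..1} \<longrightarrow>
        prob_space (f xs) \<and> sets (f xs) = sets (restrict_space borel {0..1::real}))"

definition agent_cost :: "real \<Rightarrow> real measure \<Rightarrow> real" where
  "agent_cost x M = (\<integral>y. 1 - \<bar>x - y\<bar> \<partial>M)"

definition strategyproof :: "(real list \<Rightarrow> real measure) \<Rightarrow> bool" where
  "strategyproof f \<longleftrightarrow>
     (\<forall>xs i x'. set xs \<subseteq> {0..1} \<longrightarrow> i < length xs \<longrightarrow> x' \<in> {0..1} \<longrightarrow>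
        agent_cost (xs ! i) (f xs) \<le> agent_cost (xs ! i) (f (xs[i := x'])))"

definition sc_p :: "real \<Rightarrow> real \<Rightarrow> real list \<Rightarrow> real" where
  "sc_p p y xs = (\<Sum>x\<leftarrow>xs. (1 - \<bar>x - y\<bar>) powr p) powr (1 / p)"

definition sc_inf :: "real \<Rightarrow> real list \<Rightarrow> real" where
  "sc_inf y xs = Max ((\<lambda>x. 1 - \<bar>x - y\<bar>) ` set xs)"

definition approx_within ::
  "(real \<Rightarrow> real list \<Rightarrow> real) \<Rightarrow> (real list \<Rightarrow> real measure) \<Rightarrow> real \<Rightarrow> bool" where
  "approx_within sc f \<rho> \<longleftrightarrow>
     (\<forall>xs. xs \<noteq> [] \<longrightarrow> set xs \<subseteq> {0..1} \<longrightarrow>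
        (\<integral>y. sc y xs \<partial>f xs) \<le> \<rho> * (INF z\<in>{0..1}. sc z xs))"

end

theory Submission
  imports Defs
begin

(* Two agents and five profiles suffice. When both agents sit at 0 (resp. 1) the optimum is 0,
   so a mechanism with finite ratio puts the facility at 1 (resp. 0) almost surely.
   Strategyproofness transfers this: in the profile (0, 5/8) the agent at 5/8 could report 0,
   so its expected distance to the facility is at least 3/8, and symmetrically for the agent at
   3/8 in (3/8, 1). In (3/8, 5/8) the two expected distances sum to at most 1, and each agent
   could move outward to reach (0, 5/8) resp. (3/8, 1); hence the expected distance of the
   facility from 3/8 under (0, 5/8) plus that from 5/8 under (3/8, 1) is at most 1.
   If the social cost of utilities u, v is at least c (u + v) (c = 2 powr (1/p) / 2 for L_p,
   c = 1/2 for L_infinity), a pointwise inequality trading social cost against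
   |3/8 - y| - |5/8 - y| with weight (11 c - 5) / 4 then forces the expected cost on (0, 5/8)
   or (3/8, 1), whose optimum is 5/8, up to (11 c + 15) / 20 times the optimum. *)

lemma max_le_powr_sum_root:
  fixes p u v :: real
  assumes u: "0 \<le> u" and v: "0 \<le> v" and "0 < p"
  shows "max u v \<le> (u powr p + v powr p) powr (1/p)"
proof -
  have "w = (w powr p) powr (1/p)" if "0 \<le> w" for w
    using that assms by (simp add: powr_powr)
  moreover have "(w powr p) powr (1/p) \<le> (u powr p + v powr p) powr (1/p)" if "w \<in> {u, v}" for w
    using that assms u v by (intro powr_mono2) auto
  ultimately show ?thesis using u v by (metis insertCI max_def)
qed

lemma powr_sum_root_le_sum:
  fixes p u v :: real
  assumes u: "0 \<le> u" and v: "0 \<le> v" and "1 \<le> p"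
  shows "(u powr p + v powr p) powr (1/p) \<le> u + v"
proof -
  have "w powr p \<le> w * (u + v) powr (p - 1)" if "w \<in> {u, v}" for w
  proof -
    have "w powr p = w * w powr (p - 1)" using that u v by (auto simp: powr_mult_base)
    also have "\<dots> \<le> w * (u + v) powr (p - 1)"
      using that u v assms by (intro mult_left_mono powr_mono2) auto
    finally show ?thesis .
  qed
  then have "u powr p + v powr p \<le> (u + v) * (u + v) powr (p - 1)"
    by (simp add: add_mono distrib_right)
  also have "\<dots> = (u + v) powr p" using u v by (simp add: powr_mult_base)
  finally have "(u powr p + v powr p) powr (1/p) \<le> ((u + v) powr p) powr (1/p)"
    using assms by (intro powr_mono2) auto
  also have "\<dots> = u + v" using u v assms by (simp add: powr_powr)
  finally show ?thesis .
qed

lemma powr_midpoint_le: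
  fixes p u v :: real
  assumes u: "0 \<le> u" and v: "0 \<le> v" and p: "1 \<le> p"
  shows "((u + v)/2) powr p \<le> (u powr p + v powr p)/2"
proof (cases "u = 0 \<or> v = 0")
  case True
  have "(w/2) powr p \<le> w powr p / 2" for w :: real
  proof -
    have "(2::real) powr 1 \<le> 2 powr p" using p by (intro powr_mono) auto
    then have "w powr p / 2 powr p \<le> w powr p / 2" by (intro divide_left_mono) auto
    then show ?thesis by (simp add: powr_divide)
  qed
  then show ?thesis using True by auto
next
  case False
  then show ?thesis
    using convex_onD[OF powr_convex[OF p], of "1/2" u v] u v by (simp add: field_simps)
qed

lemma powr_sum_root_ge_mean:
  fixes p u v :: real
  assumes u: "0 \<le> u" and v: "0 \<le> v" and p: "1 \<le> p"
  shows "2 powr (1/p) / 2 * (u + v) \<le> (u powr p + v powr p) powr (1/p)"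
proof -
  have "(u + v)/2 = (((u + v)/2) powr p) powr (1/p)" using u v p by (simp add: powr_powr)
  also have "\<dots> \<le> ((u powr p + v powr p)/2) powr (1/p)"
    using powr_midpoint_le[OF u v p] u v p by (intro powr_mono2) auto
  also have "\<dots> = (u powr p + v powr p) powr (1/p) / 2 powr (1/p)"
    by (rule powr_divide)
  finally show ?thesis by (simp add: field_simps)
qed

lemma ln_2_lower_bound: "13/20 \<le> ln (2::real)"
proof -
  have "exp (13/120::real) \<le> 120/107"
    using exp_ge_add_one_self[of "-(13/120)"] by (simp add: exp_minus field_simps)
  then have "exp (13/120::real) ^ 6 \<le> (120/107) ^ 6" by (rule power_mono) simp
  also have "\<dots> \<le> 2" by (simp add: power_divide)
  finally have "exp (13/20::real) \<le> 2" by (simp flip: exp_of_nat_mult)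
  then show ?thesis by (subst ln_ge_iff) auto
qed

lemma five_quarters_powr_le:
  fixes s :: real
  assumes s: "0 \<le> s" "s \<le> 1"
  shows "(5/4) powr s \<le> (11 * (2 powr s / 2) + 15) / 20"
proof -
  have "exp ((1 - s) *\<^sub>R 0 + s *\<^sub>R ln (5/4)) \<le> (1 - s) * exp 0 + s * exp (ln (5/4::real))"
    using s by (intro convex_onD[OF exp_convex]) auto
  then have chord: "(5/4::real) powr s \<le> 1 + s/4" by (simp add: powr_def algebra_simps)
  have "1 + s * ln 2 + (s * ln 2)\<^sup>2 / 2 \<le> (2::real) powr s"
    using exp_lower_Taylor_quadratic[of "s * ln 2"] s by (simp add: powr_def mult.commute)
  moreover have "13/20 * s \<le> s * ln 2" using mult_left_mono[OF ln_2_lower_bound s(1)] by simp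
  moreover from this have "(13/20 * s)\<^sup>2 \<le> (s * ln 2)\<^sup>2" using s by (intro power_mono) auto
  ultimately have "1 + 13/20 * s + 169/800 * s\<^sup>2 \<le> (2::real) powr s"
    by (simp add: power2_eq_square)
  moreover have "0 \<le> (s - 3/5)\<^sup>2" by simp
  ultimately have "1 + s/4 \<le> 11/40 * (2::real) powr s + 3/4"
    using s by (simp add: power2_eq_square algebra_simps)
  with chord show ?thesis by simp
qed

definition prob_on_unit_interval :: "real measure \<Rightarrow> bool" where
  "prob_on_unit_interval M \<longleftrightarrow> prob_space M \<and> sets M = sets (restrict_space borel {0..1})"

lemma rand_mechanism_prob_on_unit_interval:
  "rand_mechanism f \<Longrightarrow> set xs \<subseteq> {0..1} \<Longrightarrow> prob_on_unit_interval (f xs)"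
  unfolding rand_mechanism_def prob_on_unit_interval_def by blast

lemma prob_on_unit_interval_prob_space: "prob_on_unit_interval M \<Longrightarrow> prob_space M"
  unfolding prob_on_unit_interval_def by blast

lemma AE_unit_interval:
  assumes "prob_on_unit_interval M" "\<And>y. y \<in> {0..1} \<Longrightarrow> P y"
  shows "AE y in M. P y"
proof -
  have "sets M = sets (restrict_space borel {0..1::real})"
    using assms(1) unfolding prob_on_unit_interval_def by blast
  from sets_eq_imp_space_eq[OF this] have "space M = {0..1}" by (simp add: space_restrict_space)
  then show ?thesis using assms(2) by (intro AE_I2) auto
qed

lemma integrable_bounded_unit_interval:
  fixes g :: "real \<Rightarrow> real"
  assumes M: "prob_on_unit_interval M"
    and g: "g \<in> borel_measurable borel" "\<And>y. y \<in> {0..1} \<Longrightarrow> \<bar>g y\<bar> \<le> B"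
  shows "integrable M g"
proof -
  interpret prob_space M using M by (rule prob_on_unit_interval_prob_space)
  have "g \<in> borel_measurable M"
    using M measurable_restrict_space1[OF g(1)] measurable_cong_sets
    unfolding prob_on_unit_interval_def by blast
  then show ?thesis
    using g(2) by (intro integrable_const_bound[where B=B] AE_unit_interval[OF M]) auto
qed

lemma integrable_dist_unit_interval: "prob_on_unit_interval M \<Longrightarrow> integrable M (\<lambda>y. \<bar>x - y\<bar>)"
  by (rule integrable_bounded_unit_interval[where B="\<bar>x\<bar> + 1"]) auto

lemma expected_dist_reflected_pair_le:
  assumes M: "prob_on_unit_interval M" and a: "a \<in> {0..1}"
  shows "(\<integral>y. \<bar>a - y\<bar> \<partial>M) + (\<integral>y. \<bar>(1 - a) - y\<bar> \<partial>M) \<le> 1"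
proof -
  interpret prob_space M using M by (rule prob_on_unit_interval_prob_space)
  have "(\<integral>y. \<bar>a - y\<bar> + \<bar>(1 - a) - y\<bar> \<partial>M) \<le> 1"
    using a integrable_dist_unit_interval[OF M]
    by (intro integral_le_const AE_unit_interval[OF M] Bochner_Integration.integrable_add) auto
  then show ?thesis using integrable_dist_unit_interval[OF M] by simp
qed

lemma agent_cost_eq:
  assumes M: "prob_on_unit_interval M"
  shows "agent_cost x M = 1 - (\<integral>y. \<bar>x - y\<bar> \<partial>M)"
proof -
  interpret prob_space M using M by (rule prob_on_unit_interval_prob_space)
  show ?thesis
    unfolding agent_cost_def using integrable_dist_unit_interval[OF M] by (simp add: prob_space)
qed

abbreviation expected_dist :: "(real list \<Rightarrow> real measure) \<Rightarrow> real list \<Rightarrow> real \<Rightarrow> real" where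
  "expected_dist f xs x \<equiv> \<integral>y. \<bar>x - y\<bar> \<partial>f xs"

abbreviation expected_cost ::
    "(real list \<Rightarrow> real measure) \<Rightarrow> (real \<Rightarrow> real list \<Rightarrow> real) \<Rightarrow> real list \<Rightarrow> real" where
  "expected_cost f sc xs \<equiv> \<integral>y. sc y xs \<partial>f xs"

abbreviation optimal_cost :: "(real \<Rightarrow> real list \<Rightarrow> real) \<Rightarrow> real list \<Rightarrow> real" where
  "optimal_cost sc xs \<equiv> INF z\<in>{0..1}. sc z xs"

lemma strategyproof_expected_dist_le:
  assumes f: "rand_mechanism f" "strategyproof f"
    and xs: "set xs \<subseteq> {0..1}" and "i < length xs" and x': "x' \<in> {0..1}"
  shows "expected_dist f (xs[i := x']) (xs ! i) \<le> expected_dist f xs (xs ! i)"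
proof -
  have "set (xs[i := x']) \<subseteq> {0..1}" using xs x' set_update_subset_insert by fastforce
  then have "prob_on_unit_interval (f (xs[i := x']))" "prob_on_unit_interval (f xs)"
    using xs by (auto intro: rand_mechanism_prob_on_unit_interval[OF f(1)])
  moreover have "agent_cost (xs ! i) (f xs) \<le> agent_cost (xs ! i) (f (xs[i := x']))"
    using f(2) assms(3-5) unfolding strategyproof_def by blast
  ultimately show ?thesis by (simp add: agent_cost_eq)
qed

lemma two_agent_cost_tradeoff:
  fixes c s y \<mu> :: real
  assumes \<mu>: "0 \<le> \<mu>" "\<mu> \<le> (11*c - 5)/4" and y: "y \<in> {0..1}"
    and s_max: "max (1 - y) (1 - \<bar>5/8 - y\<bar>) \<le> s"
    and s_sum: "c * ((1 - y) + (1 - \<bar>5/8 - y\<bar>)) \<le> s"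
  shows "5/8 + \<mu>/4 \<le> s + \<mu> * (\<bar>3/8 - y\<bar> - \<bar>5/8 - y\<bar>)"
proof (cases "y \<le> 5/8")
  case True
  have "5/8 + \<mu>/2 \<le> s" using True s_sum \<mu>(2) by (simp add: field_simps)
  moreover have "\<mu> * (- 1/4) \<le> \<mu> * (\<bar>3/8 - y\<bar> - \<bar>5/8 - y\<bar>)"
    using True \<mu>(1) by (intro mult_left_mono) (auto simp: abs_if)
  ultimately show ?thesis by linarith
next
  case False
  then show ?thesis using y s_max by (simp add: abs_if)
qed

definition two_agent_cost_bounds :: "(real \<Rightarrow> real list \<Rightarrow> real) \<Rightarrow> real \<Rightarrow> bool" where
  "two_agent_cost_bounds sc c \<longleftrightarrow> (\<forall>a\<in>{0..1}. \<forall>b\<in>{0..1}.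
     (\<lambda>y. sc y [a,b]) \<in> borel_measurable borel \<and>
     (\<forall>y\<in>{0..1}. max (1 - \<bar>a - y\<bar>) (1 - \<bar>b - y\<bar>) \<le> sc y [a,b] \<and>
        c * ((1 - \<bar>a - y\<bar>) + (1 - \<bar>b - y\<bar>)) \<le> sc y [a,b] \<and>
        sc y [a,b] \<le> (1 - \<bar>a - y\<bar>) + (1 - \<bar>b - y\<bar>)))"

lemma two_agent_cost_boundsD:
  assumes "two_agent_cost_bounds sc c" "a \<in> {0..1}" "b \<in> {0..1}"
  shows "(\<lambda>y. sc y [a,b]) \<in> borel_measurable borel"
    and "y \<in> {0..1} \<Longrightarrow> max (1 - \<bar>a - y\<bar>) (1 - \<bar>b - y\<bar>) \<le> sc y [a,b]"
    and "y \<in> {0..1} \<Longrightarrow> c * ((1 - \<bar>a - y\<bar>) + (1 - \<bar>b - y\<bar>)) \<le> sc y [a,b]"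
    and "y \<in> {0..1} \<Longrightarrow> sc y [a,b] \<le> (1 - \<bar>a - y\<bar>) + (1 - \<bar>b - y\<bar>)"
  using assms unfolding two_agent_cost_bounds_def by blast+

lemma two_agent_cost_nonneg:
  assumes "two_agent_cost_bounds sc c" "a \<in> {0..1}" "b \<in> {0..1}" "y \<in> {0..1}"
  shows "0 \<le> sc y [a,b]"
proof -
  have "0 \<le> 1 - \<bar>a - y\<bar>" using assms(2,4) by auto
  also have "\<dots> \<le> max (1 - \<bar>a - y\<bar>) (1 - \<bar>b - y\<bar>)" by simp
  also have "\<dots> \<le> sc y [a,b]" using two_agent_cost_boundsD(2)[OF assms] .
  finally show ?thesis .
qed

lemma optimal_cost_two_agents:
  assumes "two_agent_cost_bounds sc c" "a \<in> {0..1}" "b \<in> {0..1}"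
  shows "0 \<le> optimal_cost sc [a,b]"
    and "z \<in> {0..1} \<Longrightarrow> optimal_cost sc [a,b] \<le> (1 - \<bar>a - z\<bar>) + (1 - \<bar>b - z\<bar>)"
proof -
  note nonneg = two_agent_cost_nonneg[OF assms]
  show "0 \<le> optimal_cost sc [a,b]" using nonneg by (intro cINF_greatest) auto
  show "optimal_cost sc [a,b] \<le> (1 - \<bar>a - z\<bar>) + (1 - \<bar>b - z\<bar>)" if "z \<in> {0..1}"
    using that nonneg two_agent_cost_boundsD(4)[OF assms]
    by (intro cINF_lower2[where x=z] bdd_belowI2) auto
qed

lemma expected_cost_dist_lower_bound:
  assumes f: "rand_mechanism f" and sc: "two_agent_cost_bounds sc c"
    and ab: "a \<in> {0..1}" "b \<in> {0..1}"
    and k: "\<And>y. y \<in> {0..1} \<Longrightarrow> k \<le> sc y [a,b] + \<mu> * \<bar>x1 - y\<bar> + \<nu> * \<bar>x2 - y\<bar>"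
  shows "k \<le> expected_cost f sc [a,b] + \<mu> * expected_dist f [a,b] x1 + \<nu> * expected_dist f [a,b] x2"
proof -
  have M: "prob_on_unit_interval (f [a,b])"
    using ab by (intro rand_mechanism_prob_on_unit_interval[OF f]) auto
  interpret prob_space "f [a,b]" using M by (rule prob_on_unit_interval_prob_space)
  have "\<bar>sc y [a,b]\<bar> \<le> 2" if "y \<in> {0..1}" for y
    using two_agent_cost_boundsD(4)[OF sc ab that] two_agent_cost_nonneg[OF sc ab that]
    unfolding abs_le_iff by linarith
  then have "integrable (f [a,b]) (\<lambda>y. sc y [a,b])"
    using two_agent_cost_boundsD(1)[OF sc ab] by (intro integrable_bounded_unit_interval[OF M])
  note integrable = this integrable_dist_unit_interval[OF M]
  have "k \<le> (\<integral>y. sc y [a,b] + \<mu> * \<bar>x1 - y\<bar> + \<nu> * \<bar>x2 - y\<bar> \<partial>f [a,b])"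
    using k integrable by (intro integral_ge_const AE_unit_interval[OF M]) auto
  then show ?thesis using integrable by simp
qed

lemma approx_within_two_agents:
  "approx_within sc f \<rho> \<Longrightarrow> a \<in> {0..1} \<Longrightarrow> b \<in> {0..1} \<Longrightarrow>
    expected_cost f sc [a,b] \<le> \<rho> * optimal_cost sc [a,b]"
  unfolding approx_within_def by simp

lemma approx_within_ratio_nonneg:
  assumes f: "rand_mechanism f" and approx: "approx_within sc f \<rho>"
    and sc: "two_agent_cost_bounds sc c"
  shows "0 \<le> \<rho>"
proof -
  have "1/2 \<le> expected_cost f sc [0,1] + 0 * expected_dist f [0,1] 0 + 0 * expected_dist f [0,1] 0"
    using two_agent_cost_boundsD(2)[OF sc, of 0 1]
    by (intro expected_cost_dist_lower_bound[OF f sc]) force+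
  then have "0 < \<rho> * optimal_cost sc [0,1]"
    using approx_within_two_agents[OF approx, of 0 1] by simp
  then show ?thesis
    using optimal_cost_two_agents(1)[OF sc, of 0 1] by (auto simp: zero_less_mult_iff)
qed

lemma expected_cost_le:
  assumes f: "rand_mechanism f" and approx: "approx_within sc f \<rho>"
    and sc: "two_agent_cost_bounds sc c" and abz: "a \<in> {0..1}" "b \<in> {0..1}" "z \<in> {0..1}"
  shows "expected_cost f sc [a,b] \<le> \<rho> * ((1 - \<bar>a - z\<bar>) + (1 - \<bar>b - z\<bar>))"
  using approx_within_two_agents[OF approx abz(1,2)] optimal_cost_two_agents(2)[OF sc abz]
    mult_left_mono[OF _ approx_within_ratio_nonneg[OF f approx sc]]
  by (meson order_trans)

lemma expected_dist_left_profile_ge: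
  assumes f: "rand_mechanism f" "strategyproof f" and approx: "approx_within sc f \<rho>"
    and sc: "two_agent_cost_bounds sc c" and x: "x \<in> {0..1}"
  shows "1 - x \<le> expected_dist f [0,x] x"
proof -
  have "1 - x \<le>
      expected_cost f sc [0,0] + 1 * expected_dist f [0,0] x + 0 * expected_dist f [0,0] x"
    using two_agent_cost_boundsD(2)[OF sc, of 0 0]
    by (intro expected_cost_dist_lower_bound[OF f(1) sc]) force+
  moreover have "expected_cost f sc [0,0] \<le> 0"
    using expected_cost_le[OF f(1) approx sc, of 0 0 1] by simp
  moreover have "expected_dist f [0,0] x \<le> expected_dist f [0,x] x"
    using x strategyproof_expected_dist_le[OF f, of "[0,x]" 1 0] by simp
  ultimately show ?thesis by simp
qed

lemma expected_dist_right_profile_ge: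
  assumes f: "rand_mechanism f" "strategyproof f" and approx: "approx_within sc f \<rho>"
    and sc: "two_agent_cost_bounds sc c" and x: "x \<in> {0..1}"
  shows "x \<le> expected_dist f [x,1] x"
proof -
  have "x \<le> expected_cost f sc [1,1] + 1 * expected_dist f [1,1] x + 0 * expected_dist f [1,1] x"
    using two_agent_cost_boundsD(2)[OF sc, of 1 1]
    by (intro expected_cost_dist_lower_bound[OF f(1) sc]) force+
  moreover have "expected_cost f sc [1,1] \<le> 0"
    using expected_cost_le[OF f(1) approx sc, of 1 1 0] by simp
  moreover have "expected_dist f [1,1] x \<le> expected_dist f [x,1] x"
    using x strategyproof_expected_dist_le[OF f, of "[x,1]" 0 1] by simp
  ultimately show ?thesis by simp
qed

lemma expected_dist_outer_profiles_le:
  assumes f: "rand_mechanism f" "strategyproof f" and a: "a \<in> {0..1}"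
  shows "expected_dist f [0,1-a] a + expected_dist f [a,1] (1-a) \<le> 1"
proof -
  have "expected_dist f [0,1-a] a \<le> expected_dist f [a,1-a] a"
    using a strategyproof_expected_dist_le[OF f, of "[a,1-a]" 0 0] by simp
  moreover have "expected_dist f [a,1] (1-a) \<le> expected_dist f [a,1-a] (1-a)"
    using a strategyproof_expected_dist_le[OF f, of "[a,1-a]" 1 1] by simp
  moreover have "expected_dist f [a,1-a] a + expected_dist f [a,1-a] (1-a) \<le> 1"
    using a
    by (intro expected_dist_reflected_pair_le rand_mechanism_prob_on_unit_interval[OF f(1)]) auto
  ultimately show ?thesis by linarith
qed

lemma expected_tradeoff_left:
  assumes f: "rand_mechanism f" and sc: "two_agent_cost_bounds sc c"
    and \<mu>: "0 \<le> \<mu>" "\<mu> \<le> (11*c - 5)/4"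
  shows "5/8 + \<mu>/4 \<le> expected_cost f sc [0,5/8]
    + \<mu> * expected_dist f [0,5/8] (3/8) + (-\<mu>) * expected_dist f [0,5/8] (5/8)"
proof (rule expected_cost_dist_lower_bound[OF f sc])
  fix y :: real assume y: "y \<in> {0..1}"
  then have "5/8 + \<mu>/4 \<le> sc y [0,5/8] + \<mu> * (\<bar>3/8 - y\<bar> - \<bar>5/8 - y\<bar>)"
    using two_agent_cost_tradeoff[OF \<mu> y] two_agent_cost_boundsD(2,3)[OF sc, of 0 "5/8" y] by simp
  then show "5/8 + \<mu>/4 \<le> sc y [0,5/8] + \<mu> * \<bar>3/8 - y\<bar> + (-\<mu>) * \<bar>5/8 - y\<bar>"
    by (simp add: algebra_simps)
qed auto

lemma expected_tradeoff_right:
  assumes f: "rand_mechanism f" and sc: "two_agent_cost_bounds sc c"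
    and \<mu>: "0 \<le> \<mu>" "\<mu> \<le> (11*c - 5)/4"
  shows "5/8 + \<mu>/4 \<le> expected_cost f sc [3/8,1]
    + \<mu> * expected_dist f [3/8,1] (5/8) + (-\<mu>) * expected_dist f [3/8,1] (3/8)"
proof (rule expected_cost_dist_lower_bound[OF f sc])
  fix y :: real assume y: "y \<in> {0..1}"
  (* the profile (3/8, 1) is the mirror image of (0, 5/8) under y \<mapsto> 1 - y *)
  have reflect:
      "\<bar>3/8 - (1 - y)\<bar> = \<bar>5/8 - y\<bar>" "\<bar>5/8 - (1 - y)\<bar> = \<bar>3/8 - y\<bar>" "\<bar>1 - y\<bar> = 1 - y"
    using y by auto
  have "5/8 + \<mu>/4 \<le> sc y [3/8,1] + \<mu> * (\<bar>5/8 - y\<bar> - \<bar>3/8 - y\<bar>)"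
    using two_agent_cost_tradeoff[OF \<mu>, of "1 - y"] y
      two_agent_cost_boundsD(2,3)[OF sc, of "3/8" 1 y]
    unfolding reflect by (simp add: max.commute add.commute)
  then show "5/8 + \<mu>/4 \<le> sc y [3/8,1] + \<mu> * \<bar>5/8 - y\<bar> + (-\<mu>) * \<bar>3/8 - y\<bar>"
    by (simp add: algebra_simps)
qed auto

lemma ratio_lower_bound:
  assumes f: "rand_mechanism f" "strategyproof f" and approx: "approx_within sc f \<rho>"
    and sc: "two_agent_cost_bounds sc c" and c: "5/11 \<le> c"
  shows "(11*c + 15)/20 \<le> \<rho>"
proof -
  define \<mu> where "\<mu> = (11*c - 5)/4"
  have \<mu>: "0 \<le> \<mu>" "\<mu> \<le> (11*c - 5)/4" using c by (auto simp: \<mu>_def)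
  have "expected_dist f [0,5/8] (3/8) + expected_dist f [3/8,1] (5/8) \<le> 1"
    using expected_dist_outer_profiles_le[OF f, of "3/8"] by simp
  moreover have "3/8 \<le> expected_dist f [0,5/8] (5/8)" "3/8 \<le> expected_dist f [3/8,1] (3/8)"
    using expected_dist_left_profile_ge[OF f approx sc, of "5/8"]
      expected_dist_right_profile_ge[OF f approx sc, of "3/8"] by auto
  ultimately have "\<mu> * (expected_dist f [0,5/8] (3/8) - expected_dist f [0,5/8] (5/8)
      + expected_dist f [3/8,1] (5/8) - expected_dist f [3/8,1] (3/8)) \<le> \<mu> * (1/4)"
    by (intro mult_left_mono \<mu>) auto
  moreover have "expected_cost f sc [0,5/8] \<le> \<rho> * (5/8)" "expected_cost f sc [3/8,1] \<le> \<rho> * (5/8)"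
    using expected_cost_le[OF f(1) approx sc, of 0 "5/8" 1]
      expected_cost_le[OF f(1) approx sc, of "3/8" 1 0] by simp_all
  ultimately have "5/4 + \<mu>/4 \<le> \<rho> * (5/4)"
    using expected_tradeoff_left[OF f(1) sc \<mu>] expected_tradeoff_right[OF f(1) sc \<mu>]
    by (simp add: algebra_simps)
  then show ?thesis by (simp add: \<mu>_def field_simps)
qed

lemma sc_p_two_agents:
  "sc_p p y [a,b] = ((1 - \<bar>a - y\<bar>) powr p + (1 - \<bar>b - y\<bar>) powr p) powr (1/p)"
  by (simp add: sc_p_def)

lemma sc_inf_two_agents: "sc_inf y [a,b] = max (1 - \<bar>a - y\<bar>) (1 - \<bar>b - y\<bar>)"
  by (simp add: sc_inf_def)

lemma two_agent_cost_bounds_sc_p: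
  assumes p: "1 \<le> p"
  shows "two_agent_cost_bounds (sc_p p) (2 powr (1/p) / 2)"
  unfolding two_agent_cost_bounds_def
proof (intro ballI conjI)
  fix a b :: real
  show "(\<lambda>y. sc_p p y [a,b]) \<in> borel_measurable borel"
    unfolding sc_p_two_agents by measurable
  fix y :: real
  assume "a \<in> {0..1}" "b \<in> {0..1}" "y \<in> {0..1}"
  then have "0 \<le> 1 - \<bar>a - y\<bar>" "0 \<le> 1 - \<bar>b - y\<bar>" by auto
  note powr_sum_root_bounds =
    max_le_powr_sum_root[OF this] powr_sum_root_le_sum[OF this p] powr_sum_root_ge_mean[OF this p]
  show "max (1 - \<bar>a - y\<bar>) (1 - \<bar>b - y\<bar>) \<le> sc_p p y [a,b]"
    "2 powr (1/p) / 2 * ((1 - \<bar>a - y\<bar>) + (1 - \<bar>b - y\<bar>)) \<le> sc_p p y [a,b]"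
    "sc_p p y [a,b] \<le> (1 - \<bar>a - y\<bar>) + (1 - \<bar>b - y\<bar>)"
    using powr_sum_root_bounds p unfolding sc_p_two_agents by auto
qed

lemma two_agent_cost_bounds_sc_inf: "two_agent_cost_bounds sc_inf (1/2)"
  unfolding two_agent_cost_bounds_def sc_inf_two_agents
proof (intro ballI conjI)
  show "(\<lambda>y. max (1 - \<bar>a - y\<bar>) (1 - \<bar>b - y\<bar>)) \<in> borel_measurable borel" for a b :: real
    by measurable
qed (auto simp: max_def)

lemma sc_p_ratio_lower_bound:
  assumes "rand_mechanism f" "strategyproof f" and p: "1 \<le> p"
    and approx: "approx_within (sc_p p) f \<rho>"
  shows "(5/4) powr (1/p) \<le> \<rho>"
proof -
  have "5/11 \<le> 2 powr (1/p) / (2::real)" using p ge_one_powr_ge_zero[of 2 "1/p"] by simp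
  then have "(11 * (2 powr (1/p) / 2) + 15) / 20 \<le> \<rho>"
    by (rule ratio_lower_bound[OF assms(1,2) approx two_agent_cost_bounds_sc_p[OF p]])
  moreover have "(5/4) powr (1/p) \<le> (11 * (2 powr (1/p) / 2) + 15) / 20"
    using p by (intro five_quarters_powr_le) auto
  ultimately show ?thesis by linarith
qed

lemma sc_inf_ratio_lower_bound:
  assumes "rand_mechanism f" "strategyproof f" "approx_within sc_inf f \<rho>"
  shows "1.008 \<le> \<rho>"
proof -
  have "(11 * (1/2) + 15) / 20 \<le> \<rho>"
    by (rule ratio_lower_bound[OF assms two_agent_cost_bounds_sc_inf]) simp
  then show ?thesis by simp
qed

theorem theorem13:
  fixes f :: "real list \<Rightarrow> real measure"
  assumes "rand_mechanism f" and "strategyproof f"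
  shows "(\<forall>p::real. \<forall>\<rho>::real. 1 \<le> p \<longrightarrow> approx_within (sc_p p) f \<rho> \<longrightarrow>
            (5/4) powr (1/p) \<le> \<rho>)
       \<and> (\<forall>\<rho>::real. approx_within sc_inf f \<rho> \<longrightarrow> 1.008 \<le> \<rho>)"
  using sc_p_ratio_lower_bound[OF assms] sc_inf_ratio_lower_bound[OF assms] by blast

end
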